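(* Let $K,D,U$ be integers with $0\le U\le D$ and $U+D\le K-2$, and suppose $\gcd(K,D-U,U+1)=\gcd(K-D+U,U+1)$. Consider the two-sided single unicast index coding problem with $K$ messages and $K$ receivers, receiver $R_k$ wanting $x_k$ and having side-information $\{x_{k-U},\dots,x_{k-1}\}\cup\{x_{k+1},\dots,x_{k+D}\}$ (indices modulo $K$). Let $u_a=\frac{U+1}{\gcd(K,D-U,U+1)}$. Then no $p$-dimensional vector linear index code with $1\le p<u_a$ for this problem is of optimal length; i.e., the $u_a$-dimensional optimal length vector linear index codes for this problem are of minimal dimension.
   Context: A $p$-dimensional vector linear index code of length $N$ encodes the $pK$ message symbols (each $x_k\in\mathbb{F}_q^p$) linearly into $N$ broadcast symbols from which each receiver decodes its wanted message using its side-information; its rate is $p/N$. For this problem (with $U+D\le K-2$) the symmetric capacity is $\frac{U+1}{K-D+U}$, and a code is of optimal length if its rate equals the capacity. *)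

theory Defs
  imports Complex_Main
begin

text \<open>Messages and receivers are indexed by 0..K-1. Receiver k wants x_k and knows
  x_{k-U},...,x_{k-1} and x_{k+1},...,x_{k+D} (indices modulo K).\<close>

definition side_info :: "nat \<Rightarrow> nat \<Rightarrow> nat \<Rightarrow> nat \<Rightarrow> nat set" where
  "side_info K D U k =
     {(k + K - j) mod K | j. 1 \<le> j \<and> j \<le> U} \<union> {(k + j) mod K | j. 1 \<le> j \<and> j \<le> D}"

text \<open>A p-dimensional vector linear index code of length N is given by an encoding
  matrix L of size N x pK over the field: the n-th broadcast symbol is
  sum over k<K, i<p of L n (k,i) * x k i, where x k i is the i-th component of
  message x_k in F^p.\<close>

definition encode :: "nat \<Rightarrow> nat \<Rightarrow> (nat \<Rightarrow> nat \<times> nat \<Rightarrow> 'a::field) \<Rightarrow> (nat \<Rightarrow> nat \<Rightarrow> 'a) \<Rightarrow> nat \<Rightarrow> 'a" where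
  "encode K p L x n = (\<Sum>k<K. \<Sum>i<p. L n (k, i) * x k i)"

definition valid_vlic ::
  "nat \<Rightarrow> nat \<Rightarrow> nat \<Rightarrow> nat \<Rightarrow> nat \<Rightarrow> (nat \<Rightarrow> nat \<times> nat \<Rightarrow> 'a::field) \<Rightarrow> bool" where
  "valid_vlic K D U p N L \<longleftrightarrow>
     (\<forall>k<K. \<forall>x x' :: nat \<Rightarrow> nat \<Rightarrow> 'a.
        (\<forall>n<N. encode K p L x n = encode K p L x' n) \<and>
        (\<forall>j\<in>side_info K D U k. \<forall>i<p. x j i = x' j i)
        \<longrightarrow> (\<forall>i<p. x k i = x' k i))"

definition sym_capacity :: "nat \<Rightarrow> nat \<Rightarrow> nat \<Rightarrow> real" where
  "sym_capacity K D U = real (U + 1) / real (K - D + U)"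

definition optimal_length_vlic ::
  "nat \<Rightarrow> nat \<Rightarrow> nat \<Rightarrow> nat \<Rightarrow> nat \<Rightarrow> (nat \<Rightarrow> nat \<times> nat \<Rightarrow> 'a::field) \<Rightarrow> bool" where
  "optimal_length_vlic K D U p N L \<longleftrightarrow>
     valid_vlic K D U p N L \<and> real p / real N = sym_capacity K D U"

end

theory Submission
  imports Defs
begin

text \<open>Clearing denominators
  and cancelling g = gcd (K - D + U) (U + 1), the coprime number (U + 1) / g divides p, so
  p \<ge> (U + 1) / g, which is u_a by the gcd hypothesis.\<close>

lemma cross_mult_of_divide_eq:
  fixes p N u M :: nat
  assumes "real p / real N = real u / real M" and "u > 0" and "M > 0"
  shows "p * M = N * u"
proof -
  have "real u / real M \<noteq> 0"
    using assms(2,3) by simp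
  then have "N \<noteq> 0"
    using assms(1) by (metis div_by_0 of_nat_0)
  then have "real p * real M = real N * real u"
    using assms by (simp add: field_simps)
  then show ?thesis
    by (metis of_nat_eq_iff of_nat_mult)
qed

lemma div_gcd_dvd_of_mult_eq:
  fixes p N u M :: nat
  assumes "p * M = N * u" and "M \<noteq> 0"
  shows "u div gcd M u dvd p"
proof -
  define g where "g = gcd M u"
  obtain m v where M: "M = m * g" and u: "u = v * g" and "g \<noteq> 0"
    using assms(2) unfolding g_def by (metis dvd_div_mult_self gcd_dvd1 gcd_dvd2 gcd_eq_0_iff)
  have "coprime (u div g) (M div g)"
    using div_gcd_coprime[of u M] assms(2) by (simp add: g_def gcd.commute)
  then have "coprime v m"
    using \<open>g \<noteq> 0\<close> by (simp add: M u)
  moreover have "p * m = N * v"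
    using assms(1) \<open>g \<noteq> 0\<close> by (simp add: M u mult.assoc[symmetric])
  ultimately have "v dvd p"
    by (metis coprime_dvd_mult_left_iff dvd_triv_right)
  then show ?thesis
    unfolding g_def[symmetric] using u \<open>g \<noteq> 0\<close> by simp
qed

theorem lemma1:
  fixes K D U p N :: nat
    and L :: "nat \<Rightarrow> nat \<times> nat \<Rightarrow> 'a::{field, finite}"
  assumes "U \<le> D" and "U + D + 2 \<le> K"
    and "gcd K (gcd (D - U) (U + 1)) = gcd (K - D + U) (U + 1)"
    and "1 \<le> p" and "p < (U + 1) div gcd K (gcd (D - U) (U + 1))"
  shows "\<not> optimal_length_vlic K D U p N L"
proof
  define M where "M = K - D + U"
  assume "optimal_length_vlic K D U p N L"
  then have "real p / real N = real (U + 1) / real M"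
    by (simp add: optimal_length_vlic_def sym_capacity_def M_def)
  moreover have "M > 0"
    using assms(2) by (simp add: M_def)
  ultimately have "p * M = N * (U + 1)"
    by (intro cross_mult_of_divide_eq) simp_all
  then have "(U + 1) div gcd M (U + 1) dvd p"
    using \<open>M > 0\<close> by (intro div_gcd_dvd_of_mult_eq) simp_all
  then have "(U + 1) div gcd M (U + 1) \<le> p"
    using assms(4) by (intro dvd_imp_le) simp_all
  with assms(3,5) show False
    by (simp add: M_def)
qed

end
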